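(* Let $\mathbb{K}$ be a field and $n\geq 2$. If $\mathbb{K}$ has characteristic not $2$, every range-compatible group homomorphism $F:\mathrm{S}_n(\mathbb{K})\to\mathbb{K}^n$ is local. If $\mathbb{K}$ has characteristic $2$, the range-compatible group homomorphisms $F:\mathrm{S}_n(\mathbb{K})\to\mathbb{K}^n$ are exactly the maps of the form $$M\longmapsto MX+\begin{bmatrix}\alpha(m_{1,1}) & \alpha(m_{2,2}) & \cdots & \alpha(m_{n,n})\end{bmatrix}^T$$ with $X\in\mathbb{K}^n$ and $\alpha$ a root-linear form on $\mathbb{K}$ (in particular every such map with $X=0$ is range-compatible). Moreover, if $\mathbb{K}$ has more than $2$ elements, every range-compatible linear map on $\mathrm{S}_n(\mathbb{K})$ is local.
   Context: $\mathrm{S}_n(\mathbb{K})$ is the space of $n\times n$ symmetric matrices over $\mathbb{K}$; $m_{i,j}$ is the $(i,j)$ entry of $M$. A map $F:\mathcal{S}\to\mathbb{K}^n$ on a set of $n\times p$ matrices is range-compatible when $F(M)\in\operatorname{im}M$ for all $M$, and local when there is $X\in\mathbb{K}^p$ with $F(M)=MX$ for all $M$. In characteristic $2$, a map $\alpha:\mathbb{K}\to\mathbb{K}$ is a root-linear form when it is additive and $\alpha(\lambda^2x)=\lambda\alpha(x)$ for all $\lambda,x\in\mathbb{K}$. *)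

theory Defs
  imports "HOL-Analysis.Analysis"
begin

definition sym_mats :: "('a::field ^'n ^'n) set" where
  "sym_mats = {M. transpose M = M}"

definition range_compatible :: "('a::field ^'n ^'m) set \<Rightarrow> ('a ^'n ^'m \<Rightarrow> 'a ^'m) \<Rightarrow> bool" where
  "range_compatible S F \<longleftrightarrow> (\<forall>M\<in>S. F M \<in> range (\<lambda>x. M *v x))"

definition local_map :: "('a::field ^'n ^'m) set \<Rightarrow> ('a ^'n ^'m \<Rightarrow> 'a ^'m) \<Rightarrow> bool" where
  "local_map S F \<longleftrightarrow> (\<exists>X. \<forall>M\<in>S. F M = M *v X)"

definition additive_on :: "('a::field ^'n ^'m) set \<Rightarrow> ('a ^'n ^'m \<Rightarrow> 'a ^'m) \<Rightarrow> bool" where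
  "additive_on S F \<longleftrightarrow> (\<forall>M\<in>S. \<forall>N\<in>S. F (M + N) = F M + F N)"

definition linear_on :: "('a::field ^'n ^'m) set \<Rightarrow> ('a ^'n ^'m \<Rightarrow> 'a ^'m) \<Rightarrow> bool" where
  "linear_on S F \<longleftrightarrow> additive_on S F \<and> (\<forall>c. \<forall>M\<in>S. F (\<chi> i j. c * M $ i $ j) = c *s F M)"

definition root_linear :: "('a::field \<Rightarrow> 'a) \<Rightarrow> bool" where
  "root_linear \<alpha> \<longleftrightarrow> (\<forall>x y. \<alpha> (x + y) = \<alpha> x + \<alpha> y) \<and> (\<forall>l x. \<alpha> (l^2 * x) = l * \<alpha> x)"

end

theory Submission
  imports Defs
begin

text \<open>Write \<open>E\<^sub>i\<^sub>j(a)\<close> (\<open>sym_elem i j a\<close>) for the symmetric matrix with entry \<open>a\<close> at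
  \<open>(i,j)\<close> and \<open>(j,i)\<close>. Range compatibility forces \<open>F(E\<^sub>i\<^sub>j(a))\<close> to be supported on \<open>{i,j}\<close>; applied to the
  rank-one matrices \<open>a (e\<^sub>i + t e\<^sub>j)(e\<^sub>i + t e\<^sub>j)\<^sup>T\<close> it yields functional equations for the
  entries \<open>F(E\<^sub>i\<^sub>i(a))\<^sub>i\<close> and \<open>F(E\<^sub>i\<^sub>j(a))\<^sub>i\<close>. Solving them shows \<open>F(E\<^sub>i\<^sub>j(a))\<^sub>i = a x\<^sub>j\<close> for
  \<open>i \<noteq> j\<close> and \<open>F(E\<^sub>i\<^sub>i(a))\<^sub>i = a x\<^sub>i + \<alpha>(a)\<close> with \<open>\<alpha>\<close> root-linear, and additivity extends
  \<open>F(M) = MX + (\<alpha>(m\<^sub>i\<^sub>i))\<^sub>i\<close> from the matrices \<open>E\<^sub>i\<^sub>j(a)\<close> to all of \<open>S\<^sub>n(K)\<close>. A root-linear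
  form vanishes unless \<open>2 = 0\<close>, and a linear one vanishes as soon as some scalar differs
  from \<open>0\<close> and \<open>1\<close>. Conversely, in characteristic 2 we have \<open>z\<^sup>T M z = \<Sum> z\<^sub>i\<^sup>2 m\<^sub>i\<^sub>i\<close>, so
  \<open>\<Sum> \<alpha>(m\<^sub>i\<^sub>i) z\<^sub>i = \<alpha>(z\<^sup>T M z)\<close> vanishes for \<open>z \<in> ker M\<close>: the vector \<open>(\<alpha>(m\<^sub>i\<^sub>i))\<^sub>i\<close> is
  orthogonal to the kernel of the symmetric matrix \<open>M\<close>, hence lies in its range.\<close>

definition sym_elem :: "'n \<Rightarrow> 'n \<Rightarrow> 'a::field \<Rightarrow> 'a^'n^'n" where
  "sym_elem i j a = (\<chi> r c. if (r = i \<and> c = j) \<or> (r = j \<and> c = i) then a else 0)"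

lemma sym_mats_iff: "M \<in> sym_mats \<longleftrightarrow> (\<forall>i j. M $ i $ j = M $ j $ i)"
  unfolding sym_mats_def transpose_def by (auto simp: vec_eq_iff)

lemma sym_elem_nth: "sym_elem i j a $ r $ c = (if (r = i \<and> c = j) \<or> (r = j \<and> c = i) then a else 0)"
  unfolding sym_elem_def by simp

lemma sym_elem_in_sym_mats [simp]: "sym_elem i j a \<in> sym_mats"
  unfolding sym_mats_iff sym_elem_def by auto

lemma sym_elem_commute: "sym_elem j i a = sym_elem i j a"
  unfolding sym_elem_def by (auto simp: vec_eq_iff)

lemma sym_elem_zero [simp]: "sym_elem i j 0 = 0"
  unfolding sym_elem_def by (simp add: vec_eq_iff)

lemma sym_elem_add: "sym_elem i j (a + b) = sym_elem i j a + sym_elem i j b"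
  unfolding sym_elem_def by (auto simp: vec_eq_iff)

lemma sym_elem_mult_vec:
  "(sym_elem i j a *v v) $ k = (if k = i then a * v $ j else if k = j then a * v $ i else 0)"
proof -
  have "(sym_elem i j a *v v) $ k = (\<Sum>c\<in>UNIV. (if (k = i \<and> c = j) \<or> (k = j \<and> c = i) then a else 0) * v $ c)"
    unfolding sym_elem_def matrix_vector_mult_def by simp
  also have "\<dots> = (\<Sum>c\<in>UNIV. if c = (if k = i then j else i) then (if k = i \<or> k = j then a * v $ c else 0) else 0)"
    by (intro sum.cong refl) auto
  also have "\<dots> = (if k = i then a * v $ j else if k = j then a * v $ i else 0)"
    by simp
  finally show ?thesis .
qed

lemma sym_mats_add [simp]: "M \<in> sym_mats \<Longrightarrow> N \<in> sym_mats \<Longrightarrow> M + N \<in> sym_mats"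
  unfolding sym_mats_iff by auto

lemma sym_mats_zero [simp]: "0 \<in> sym_mats"
  unfolding sym_mats_iff by auto

lemma sym_mats_sum: "(\<And>x. x \<in> A \<Longrightarrow> g x \<in> sym_mats) \<Longrightarrow> sum g A \<in> sym_mats"
  by (induction A rule: infinite_finite_induct) auto

lemma additive_on_sym_mats_zero: "additive_on sym_mats F \<Longrightarrow> F 0 = 0"
  unfolding additive_on_def by (metis add_cancel_right_right add_0 sym_mats_zero)

lemma additive_on_sym_mats_sum:
  assumes "additive_on sym_mats F" "\<And>x. x \<in> A \<Longrightarrow> g x \<in> sym_mats"
  shows "F (sum g A) = (\<Sum>x\<in>A. F (g x))"
  using assms(2)
proof (induction A rule: infinite_finite_induct)
  case (insert x A)
  then have "g x \<in> sym_mats" "sum g A \<in> sym_mats"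
    by (auto intro: sym_mats_sum)
  with insert assms(1) show ?case
    unfolding additive_on_def by simp
qed (simp_all add: additive_on_sym_mats_zero[OF assms(1)])

lemma sum_sum_delta:
  "(\<Sum>i\<in>UNIV. \<Sum>j\<in>UNIV. if i = r then (if j = c then v else 0) else 0) = (v::'a::comm_monoid_add)"
  for r c :: "'n::finite"
proof -
  have "(\<Sum>j\<in>UNIV. if i = r then (if j = c then v else 0) else 0) = (if i = r then v else 0)" for i
    by (cases "i = r") auto
  then show ?thesis by simp
qed

text \<open>An injection into \<^typ>\<open>nat\<close> orders the index type, so that each off-diagonal pair
  is counted once.\<close>

lemma sym_mats_eq_sum_sym_elem:
  fixes M :: "'a::field^'n^'n" and ord :: "'n \<Rightarrow> nat"
  assumes "inj ord" "M \<in> sym_mats"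
  shows "M = (\<Sum>i\<in>UNIV. \<Sum>j\<in>UNIV. if ord i \<le> ord j then sym_elem i j (M $ i $ j) else 0)"
proof -
  have "(\<Sum>i\<in>UNIV. \<Sum>j\<in>UNIV. if ord i \<le> ord j then sym_elem i j (M $ i $ j) else 0) $ r $ c = M $ r $ c"
    for r c
  proof -
    have entry: "(if ord i \<le> ord j then sym_elem i j (M $ i $ j) else 0) $ r $ c =
       (if i = r then (if j = c then (if ord r \<le> ord c then M $ r $ c else 0) else 0) else 0)
     + (if i = c then (if j = r then (if ord c \<le> ord r \<and> r \<noteq> c then M $ c $ r else 0) else 0) else 0)" for i j
      unfolding sym_elem_def by auto
    have "(\<Sum>i\<in>UNIV. \<Sum>j\<in>UNIV. if ord i \<le> ord j then sym_elem i j (M $ i $ j) else 0) $ r $ c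
        = (if ord r \<le> ord c then M $ r $ c else 0) + (if ord c \<le> ord r \<and> r \<noteq> c then M $ c $ r else 0)"
      by (simp only: entry sum.distrib sum_component sum_sum_delta)
    also have "\<dots> = M $ r $ c"
    proof (cases "r = c")
      case False
      then have "ord r \<noteq> ord c"
        using assms(1) unfolding inj_def by blast
      then show ?thesis
        using False assms(2) unfolding sym_mats_iff by (cases "ord r < ord c") auto
    qed simp
    finally show ?thesis .
  qed
  then show ?thesis by (simp add: vec_eq_iff)
qed

lemma additive_on_sym_mats_eqI:
  fixes M :: "'a::field^'n^'n"
  assumes F: "additive_on sym_mats F" and G: "additive_on sym_mats G"
    and elem: "\<And>i j a. F (sym_elem i j a) = G (sym_elem i j a)"
    and M: "M \<in> sym_mats"
  shows "F M = G M"
proof -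
  obtain ord :: "'n \<Rightarrow> nat" where ord: "inj ord"
    using finite_imp_inj_to_nat_seg[of "UNIV :: 'n set"] finite_UNIV by blast
  define e where "e i j = (if ord i \<le> ord j then sym_elem i j (M $ i $ j) else 0)" for i j
  have e: "e i j \<in> sym_mats" "F (e i j) = G (e i j)" for i j
    unfolding e_def using elem additive_on_sym_mats_zero[OF F] additive_on_sym_mats_zero[OF G] by auto
  have M_eq: "M = (\<Sum>i\<in>UNIV. \<Sum>j\<in>UNIV. e i j)"
    unfolding e_def by (rule sym_mats_eq_sum_sym_elem[OF ord M])
  have sum_of_elems: "H M = (\<Sum>i\<in>UNIV. \<Sum>j\<in>UNIV. H (e i j))" if H: "additive_on sym_mats H" for H
  proof -
    have "H M = H (\<Sum>i\<in>UNIV. \<Sum>j\<in>UNIV. e i j)"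
      using M_eq by (rule arg_cong)
    also have "\<dots> = (\<Sum>i\<in>UNIV. H (\<Sum>j\<in>UNIV. e i j))"
      using e(1) by (intro additive_on_sym_mats_sum[OF H] sym_mats_sum)
    also have "\<dots> = (\<Sum>i\<in>UNIV. \<Sum>j\<in>UNIV. H (e i j))"
      using e(1) by (intro sum.cong refl additive_on_sym_mats_sum[OF H])
    finally show ?thesis .
  qed
  show ?thesis
    unfolding sum_of_elems[OF F] sum_of_elems[OF G] e(2) ..
qed

lemma two_eq_zero_iff_CHAR: "(2::'a::field) = 0 \<longleftrightarrow> CHAR('a) = 2"
proof
  assume "(2::'a) = 0"
  then have "of_nat 2 = (0::'a)"
    by simp
  then have "CHAR('a) dvd 2"
    by (simp only: of_nat_eq_0_iff_char_dvd)
  then show "CHAR('a) = 2"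
    using CHAR_not_1 by (metis One_nat_def two_is_prime_nat prime_nat_iff)
next
  assume "CHAR('a) = 2"
  then have "of_nat 2 = (0::'a)"
    by (simp only: of_nat_eq_0_iff_char_dvd) simp
  then show "(2::'a) = 0"
    by simp
qed

lemma add_self_eq_0_char_2: "(2::'a::ring_1) = 0 \<Longrightarrow> x + x = (0::'a)"
  by (metis mult_2 mult_zero_left)

lemma root_linear_add: "root_linear \<alpha> \<Longrightarrow> \<alpha> (x + y) = \<alpha> x + \<alpha> y"
  unfolding root_linear_def by blast

lemma root_linear_zero: "root_linear \<alpha> \<Longrightarrow> \<alpha> 0 = 0"
  using root_linear_add[of \<alpha> 0 0] by (metis add.right_neutral add_left_cancel)

lemma root_linear_sum:
  assumes "root_linear \<alpha>"
  shows "\<alpha> (sum u A) = (\<Sum>x\<in>A. \<alpha> (u x))"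
  by (induction A rule: infinite_finite_induct)
    (simp_all add: root_linear_zero[OF assms] root_linear_add[OF assms])

text \<open>Root-linearity gives \<open>\<alpha>(4x) = 2 \<alpha>(x)\<close>, additivity \<open>\<alpha>(4x) = 4 \<alpha>(x)\<close>.\<close>

lemma root_linear_eq_0:
  fixes \<alpha> :: "'a::field \<Rightarrow> 'a"
  assumes "root_linear \<alpha>" "(2::'a) \<noteq> 0"
  shows "\<alpha> x = 0"
proof -
  have "\<alpha> (2^2 * x) = 2 * \<alpha> x"
    using assms(1) unfolding root_linear_def by blast
  moreover have "\<alpha> (2^2 * x) = \<alpha> ((x + x) + (x + x))"
    by (rule arg_cong[where f = \<alpha>]) (simp add: algebra_simps power2_eq_square)
  moreover have "\<dots> = 2 * \<alpha> x + 2 * \<alpha> x"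
    by (simp only: root_linear_add[OF assms(1)] mult_2)
  ultimately have "2 * \<alpha> x = 0"
    by (metis add_cancel_right_right)
  with assms(2) show ?thesis by simp
qed

lemma double_sum_symmetric_char_2:
  fixes q :: "'n \<Rightarrow> 'n \<Rightarrow> 'a::comm_ring_1"
  assumes "(2::'a) = 0" "\<And>i j. q i j = q j i"
  shows "(\<Sum>i\<in>A. \<Sum>j\<in>A. q i j) = (\<Sum>i\<in>A. q i i)"
proof (induction A rule: infinite_finite_induct)
  case (insert x A)
  have swap: "(\<Sum>i\<in>A. q i x) = (\<Sum>j\<in>A. q x j)"
    by (rule sum.cong[OF refl]) (rule assms(2))
  have twice: "(\<Sum>j\<in>A. q x j) + (\<Sum>j\<in>A. q x j) = 0"
    by (rule add_self_eq_0_char_2[OF assms(1)])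
  have "(\<Sum>i\<in>insert x A. \<Sum>j\<in>insert x A. q i j)
      = q x x + (\<Sum>j\<in>A. q x j) + ((\<Sum>i\<in>A. q i x) + (\<Sum>i\<in>A. \<Sum>j\<in>A. q i j))"
    using insert.hyps by (simp add: sum.distrib add.assoc)
  also have "\<dots> = q x x + ((\<Sum>j\<in>A. q x j) + (\<Sum>j\<in>A. q x j)) + (\<Sum>i\<in>A. \<Sum>j\<in>A. q i j)"
    unfolding swap by (simp only: add.assoc)
  also have "\<dots> = (\<Sum>i\<in>insert x A. q i i)"
    using insert.hyps insert.IH twice by simp
  finally show ?case .
qed simp_all

lemma quadratic_form_sym_char_2:
  fixes M :: "'a::field^'n^'n"
  assumes "(2::'a) = 0" "M \<in> sym_mats"
  shows "(\<Sum>i\<in>UNIV. z $ i * (M *v z) $ i) = (\<Sum>i\<in>UNIV. (z $ i)^2 * M $ i $ i)"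
proof -
  have "(\<Sum>i\<in>UNIV. z $ i * (M *v z) $ i) = (\<Sum>i\<in>UNIV. \<Sum>j\<in>UNIV. z $ i * M $ i $ j * z $ j)"
    by (simp add: matrix_vector_mult_def sum_distrib_left mult.assoc)
  also have "\<dots> = (\<Sum>i\<in>UNIV. z $ i * M $ i $ i * z $ i)"
    using assms unfolding sym_mats_iff by (intro double_sum_symmetric_char_2) (auto simp: ac_simps)
  finally show ?thesis by (simp add: power2_eq_square ac_simps)
qed

lemma range_mult_vec_subspace: "vec.subspace (range (\<lambda>x. (M::'a::field^'n^'m) *v x))"
  using vec.subspace_image[OF vec.subspace_UNIV, of M] by simp

text \<open>The left null vector is the coordinate vector of a linear functional that vanishes on
  the column space but not at \<open>y\<close>.\<close>

lemma exists_left_null_vector: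
  fixes M :: "'a::field^'n^'m"
  assumes "y \<notin> range (\<lambda>x. M *v x)"
  shows "\<exists>z. z v* M = 0 \<and> (\<Sum>i\<in>UNIV. y $ i * z $ i) \<noteq> 0"
proof -
  let ?W = "range (\<lambda>x. M *v x)"
  obtain B where B: "B \<subseteq> ?W" "vec.independent B" "?W \<subseteq> vec.span B"
    using vec.maximal_independent_subset[of ?W] by blast
  have "y \<notin> vec.span B"
    using vec.span_minimal[OF B(1) range_mult_vec_subspace] assms by blast
  then have "vec.independent (insert y B)"
    using vec.independent_insert[of y B] B(2) by auto
  interpret pair: vector_space_pair "(*s) :: 'a \<Rightarrow> 'a^'m \<Rightarrow> 'a^'m" "(*) :: 'a \<Rightarrow> 'a \<Rightarrow> 'a" ..
  obtain g where lin: "Vector_Spaces.linear (*s) (*) g"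
      and g: "\<forall>x\<in>insert y B. g x = (if x = y then 1 else 0)"
    using pair.linear_independent_extend[OF \<open>vec.independent (insert y B)\<close>,
        of "\<lambda>x. if x = y then 1 else 0"] by blast
  interpret g: Vector_Spaces.linear "(*s) :: 'a \<Rightarrow> 'a^'m \<Rightarrow> 'a^'m" "(*) :: 'a \<Rightarrow> 'a \<Rightarrow> 'a" g
    by (rule lin)
  have "B \<subseteq> {x. g x = 0}"
    using g B(1) assms by auto
  then have g_W: "g w = 0" if "w \<in> ?W" for w
    using vec.span_minimal[OF _ g.subspace_kernel] B(3) that by blast
  define z :: "'a^'m" where "z = (\<chi> i. g (axis i 1))"
  have g_eq: "g w = (\<Sum>i\<in>UNIV. w $ i * z $ i)" for w
  proof -
    have "g w = g (\<Sum>i\<in>UNIV. w $ i *s axis i 1)"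
      by (simp add: basis_expansion)
    then show ?thesis
      by (simp add: g.sum g.scale z_def)
  qed
  have "(z v* M) $ k = g (M *v axis k 1)" for k
    unfolding g_eq by (simp add: vector_matrix_mult_def matrix_vector_mult_def axis_def
        if_distrib ac_simps cong: if_cong)
  moreover have "g (M *v axis k 1) = 0" for k
    using g_W by blast
  ultimately have "z v* M = 0"
    by (simp add: vec_eq_iff)
  moreover have "(\<Sum>i\<in>UNIV. y $ i * z $ i) = 1"
    using g g_eq by simp
  ultimately show ?thesis by auto
qed

lemma root_linear_diag_in_range:
  fixes M :: "'a::field^'n^'n"
  assumes two: "(2::'a) = 0" and \<alpha>: "root_linear \<alpha>" and M: "M \<in> sym_mats"
  shows "(\<chi> i. \<alpha> (M $ i $ i)) \<in> range (\<lambda>x. M *v x)"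
proof (rule ccontr)
  assume "(\<chi> i. \<alpha> (M $ i $ i)) \<notin> range (\<lambda>x. M *v x)"
  from exists_left_null_vector[OF this] obtain z
    where "z v* M = 0" and "(\<Sum>i\<in>UNIV. (\<chi> i. \<alpha> (M $ i $ i)) $ i * z $ i) \<noteq> 0"
    by blast
  then have nonzero: "(\<Sum>i\<in>UNIV. \<alpha> (M $ i $ i) * z $ i) \<noteq> 0"
    by (simp only: vec_lambda_beta not_False_eq_True)
  have "M *v z = transpose M *v z"
    using M unfolding sym_mats_def by simp
  with \<open>z v* M = 0\<close> have "M *v z = 0"
    by (simp only: transpose_matrix_vector)
  have "(\<Sum>i\<in>UNIV. \<alpha> (M $ i $ i) * z $ i) = (\<Sum>i\<in>UNIV. \<alpha> ((z $ i)^2 * M $ i $ i))"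
    using \<alpha> unfolding root_linear_def by (simp add: mult.commute)
  also have "\<dots> = \<alpha> (\<Sum>i\<in>UNIV. z $ i * (M *v z) $ i)"
    by (simp only: quadratic_form_sym_char_2[OF two M] root_linear_sum[OF \<alpha>])
  also have "\<dots> = 0"
    using \<open>M *v z = 0\<close> root_linear_zero[OF \<alpha>] by simp
  finally show False
    using nonzero by simp
qed

lemma additive_on_normal_form:
  assumes "root_linear \<alpha>"
  shows "additive_on sym_mats (\<lambda>M. M *v X + (\<chi> i. \<alpha> (M $ i $ i)))"
  using assms unfolding additive_on_def root_linear_def
  by (simp add: matrix_vector_mult_add_rdistrib vec_eq_iff)

lemma range_compatible_normal_form:
  assumes "(2::'a::field) = 0" "root_linear \<alpha>"
  shows "range_compatible sym_mats (\<lambda>M::'a^'n^'n. M *v X + (\<chi> i. \<alpha> (M $ i $ i)))"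
  unfolding range_compatible_def
proof
  fix M :: "'a^'n^'n"
  assume "M \<in> sym_mats"
  then obtain w where "(\<chi> i. \<alpha> (M $ i $ i)) = M *v w"
    using root_linear_diag_in_range[OF assms] by blast
  then have "M *v X + (\<chi> i. \<alpha> (M $ i $ i)) = M *v (X + w)"
    by (simp add: matrix_vector_right_distrib)
  then show "M *v X + (\<chi> i. \<alpha> (M $ i $ i)) \<in> range (\<lambda>x. M *v x)"
    by auto
qed

lemma additive_range_compatible_normal_form:
  assumes "(2::'a::field) = 0" "root_linear \<alpha>"
    and "\<forall>M\<in>sym_mats. F M = M *v X + (\<chi> i. \<alpha> (M $ i $ i))"
  shows "additive_on sym_mats F \<and> range_compatible sym_mats (F :: 'a^'n^'n \<Rightarrow> 'a^'n)"
  using additive_on_normal_form[OF assms(2), of X] range_compatible_normal_form[OF assms(1,2), of X]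
    assms(3)
  unfolding additive_on_def range_compatible_def by simp

lemma local_map_normal_form_zero:
  assumes "\<forall>M\<in>S. F M = M *v X + (\<chi> i. \<alpha> (M $ i $ i))" "\<And>x. \<alpha> x = 0"
  shows "local_map S F"
  using assms unfolding local_map_def by (auto simp: vec_eq_iff)

locale sym_range_compatible_hom =
  fixes F :: "'a::field^'n^'n \<Rightarrow> 'a^'n"
  assumes additive: "additive_on sym_mats F"
    and compatible: "range_compatible sym_mats F"
    and card_ge_2: "CARD('n) \<ge> 2"
begin

abbreviation diag_entry :: "'n \<Rightarrow> 'a \<Rightarrow> 'a" where
  "diag_entry i a \<equiv> F (sym_elem i i a) $ i"

abbreviation cross_entry :: "'n \<Rightarrow> 'n \<Rightarrow> 'a \<Rightarrow> 'a" where
  "cross_entry i j a \<equiv> F (sym_elem i j a) $ i"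

lemma F_add: "M \<in> sym_mats \<Longrightarrow> N \<in> sym_mats \<Longrightarrow> F (M + N) = F M + F N"
  using additive unfolding additive_on_def by blast

lemma F_sym_elem_add: "F (sym_elem i j (a + b)) = F (sym_elem i j a) + F (sym_elem i j b)"
  by (simp add: sym_elem_add F_add)

lemma F_sym_elem_uminus: "F (sym_elem i j (- a)) = - F (sym_elem i j a)"
  using F_sym_elem_add[of i j "- a" a] additive_on_sym_mats_zero[OF additive]
  by (simp add: eq_neg_iff_add_eq_0)

lemma F_eq_mult_vec: "M \<in> sym_mats \<Longrightarrow> \<exists>v. F M = M *v v"
  using compatible unfolding range_compatible_def by blast

lemma F_sym_elem_outside: "k \<noteq> i \<Longrightarrow> k \<noteq> j \<Longrightarrow> F (sym_elem i j a) $ k = 0"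
  using F_eq_mult_vec[of "sym_elem i j a"] by (auto simp: sym_elem_mult_vec)

lemma exists_other_index: "\<exists>i::'n. i \<noteq> j"
proof (rule ccontr)
  assume "\<nexists>i. i \<noteq> j"
  then have "(UNIV :: 'n set) \<subseteq> {j}"
    by blast
  then have "CARD('n) \<le> card {j}"
    by (intro card_mono) simp_all
  with card_ge_2 show False by simp
qed

text \<open>The matrix \<open>a (e\<^sub>i + t e\<^sub>j)(e\<^sub>i + t e\<^sub>j)\<^sup>T\<close> has rank one: its column space is
  spanned by \<open>e\<^sub>i + t e\<^sub>j\<close>.\<close>

lemma rank_one_identity:
  assumes "i \<noteq> j"
  shows "cross_entry j i (a * t) + diag_entry j (a * t * t)
    = t * (diag_entry i a + cross_entry i j (a * t))"
proof -
  define R where "R = sym_elem i i a + sym_elem i j (a * t) + sym_elem j j (a * t * t)"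
  have "R \<in> sym_mats"
    unfolding R_def by (intro sym_mats_add sym_elem_in_sym_mats)
  then obtain v where v: "F R = R *v v"
    using F_eq_mult_vec by blast
  have F_R: "F R = F (sym_elem i i a) + F (sym_elem i j (a * t)) + F (sym_elem j j (a * t * t))"
    unfolding R_def by (simp add: F_add)
  have "(R *v v) $ j = t * (R *v v) $ i"
    using assms by (simp add: R_def sym_elem_mult_vec algebra_simps)
  then show ?thesis
    using assms F_sym_elem_outside[of i j j] F_sym_elem_outside[of j i i]
    unfolding v[symmetric] F_R by (simp add: sym_elem_commute[of i j])
qed

lemma polarised_identity:
  assumes "i \<noteq> j"
  shows "diag_entry j (a * t) + diag_entry j (a * t) = t * cross_entry i j a + cross_entry i j (a * t)"
proof -
  have "a * (t + 1) = a * t + a" "(a * t + a) * (t + 1) = a * t * t + a * t + a * t + a"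
    by (simp_all add: algebra_simps)
  note expand = this F_sym_elem_add vector_add_component
  show ?thesis
    using rank_one_identity[OF assms, of a "t + 1", unfolded expand]
      rank_one_identity[OF assms, of a t] rank_one_identity[OF assms, of a 1, unfolded mult_1_right]
    by algebra
qed

lemma cross_entry_eq_diag_entry:
  assumes "(2::'a) \<noteq> 0" "i \<noteq> j"
  shows "cross_entry i j a = diag_entry j a"
proof -
  have "cross_entry j i a + diag_entry j a = diag_entry i a + cross_entry i j a"
    using rank_one_identity[OF assms(2), of a 1] by simp
  moreover have "- cross_entry j i a + diag_entry j a = - diag_entry i a + cross_entry i j a"
    using rank_one_identity[OF assms(2), of a "- 1"] by (simp add: F_sym_elem_uminus)
  ultimately have "2 * (diag_entry j a - cross_entry i j a) = 0"
    by algebra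
  with assms(1) show ?thesis by simp
qed

lemma cross_entry_linear_char_2:
  assumes "(2::'a) = 0" "i \<noteq> j"
  shows "cross_entry i j t = t * cross_entry i j 1"
proof -
  have "t * cross_entry i j 1 + cross_entry i j t = 0"
    using polarised_identity[OF assms(2), of 1 t] add_self_eq_0_char_2[OF assms(1)] by simp
  then have "cross_entry i j t = - (t * cross_entry i j 1)"
    by (simp add: eq_neg_iff_add_eq_0 add.commute)
  also have "\<dots> = t * cross_entry i j 1"
    by (rule neg_eq_iff_add_eq_0[THEN iffD2, OF add_self_eq_0_char_2[OF assms(1)]])
  finally show ?thesis .
qed

lemma cross_entry_other_row:
  assumes "i \<noteq> j" "k \<noteq> j" "i \<noteq> k"
  shows "cross_entry i j a = cross_entry k j a"
proof -
  define M where "M = sym_elem i j a + sym_elem k j a"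
  have "M \<in> sym_mats"
    unfolding M_def by (intro sym_mats_add sym_elem_in_sym_mats)
  then obtain v where v: "F M = M *v v"
    using F_eq_mult_vec by blast
  have "(M *v v) $ i = (M *v v) $ k"
    using assms by (simp add: M_def matrix_vector_mult_add_rdistrib sym_elem_mult_vec)
  then have "F M $ i = F M $ k"
    unfolding v .
  then show ?thesis
    using assms F_sym_elem_outside[of i k j] F_sym_elem_outside[of k i j] by (simp add: M_def F_add)
qed

lemma cross_entry_linear: "\<exists>X. \<forall>i j a. i \<noteq> j \<longrightarrow> cross_entry i j a = a * X $ j"
proof (cases "(2::'a) = 0")
  case False
  have "cross_entry i j a = a * diag_entry j 1" if "i \<noteq> j" for i j a
  proof -
    have "diag_entry j a + diag_entry j a = a * diag_entry j 1 + diag_entry j a"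
      using polarised_identity[OF that, of 1 a] cross_entry_eq_diag_entry[OF False that] by simp
    then show ?thesis
      using cross_entry_eq_diag_entry[OF False that] by simp
  qed
  then show ?thesis
    by (intro exI[of _ "\<chi> j. diag_entry j 1"]) simp
next
  case True
  define X :: "'a^'n" where "X = (\<chi> j. cross_entry (SOME i. i \<noteq> j) j 1)"
  have "cross_entry i j a = a * X $ j" if "i \<noteq> j" for i j a
  proof -
    let ?k = "SOME i. i \<noteq> j"
    have "?k \<noteq> j"
      using someI_ex[OF exists_other_index] .
    then have "cross_entry i j 1 = cross_entry ?k j 1"
      using that cross_entry_other_row[of i j ?k] by (cases "i = ?k") simp_all
    then show ?thesis
      using cross_entry_linear_char_2[OF True that, of a] unfolding X_def by simp
  qed
  then show ?thesis by blast
qed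

lemma normal_form: "\<exists>X \<alpha>. root_linear \<alpha> \<and> (\<forall>M\<in>sym_mats. F M = M *v X + (\<chi> i. \<alpha> (M $ i $ i)))"
proof -
  obtain X where X: "\<And>i j a. i \<noteq> j \<Longrightarrow> cross_entry i j a = a * X $ j"
    using cross_entry_linear by blast
  obtain i0 j0 :: 'n where ij0: "i0 \<noteq> j0"
    using exists_other_index by blast
  define \<alpha> where "\<alpha> a = diag_entry j0 a - a * X $ j0" for a
  have diag: "diag_entry i a = a * X $ i + \<alpha> a" for i a
  proof (cases "i = j0")
    case False
    have "a * X $ i + diag_entry j0 a = diag_entry i a + a * X $ j0"
      using rank_one_identity[OF False, of a 1] X[OF False, of a] X[of j0 i a] False by simp
    then show ?thesis
      unfolding \<alpha>_def by algebra
  qed (simp add: \<alpha>_def)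
  have "\<alpha> (l^2 * x) = l * \<alpha> x" for l x
  proof -
    have "x * l * X $ i0 + diag_entry j0 (x * l * l) = l * (diag_entry i0 x + x * l * X $ j0)"
      using rank_one_identity[OF ij0, of x l] X[OF ij0, of "x * l"] X[of j0 i0 "x * l"] ij0 by simp
    then have "\<alpha> (x * l * l) = l * \<alpha> x"
      using diag[of i0 x] unfolding \<alpha>_def by algebra
    moreover have "l^2 * x = x * l * l"
      by (simp add: power2_eq_square)
    ultimately show ?thesis
      by (simp only:)
  qed
  moreover have "\<alpha> (x + y) = \<alpha> x + \<alpha> y" for x y
    unfolding \<alpha>_def by (simp add: F_sym_elem_add algebra_simps)
  ultimately have \<alpha>: "root_linear \<alpha>"
    unfolding root_linear_def by blast
  have "F M = M *v X + (\<chi> i. \<alpha> (M $ i $ i))" if "M \<in> sym_mats" for M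
  proof (rule additive_on_sym_mats_eqI[OF additive additive_on_normal_form[OF \<alpha>] _ that])
    fix i j a
    show "F (sym_elem i j a) = sym_elem i j a *v X + (\<chi> k. \<alpha> (sym_elem i j a $ k $ k))"
      using F_sym_elem_outside[of _ i j a] diag X[of i j a] X[of j i a] root_linear_zero[OF \<alpha>]
      by (auto simp: vec_eq_iff sym_elem_mult_vec sym_elem_nth sym_elem_commute[of j i])
  qed
  with \<alpha> show ?thesis by blast
qed

lemma local_map_if_two_neq_0:
  assumes "(2::'a) \<noteq> 0"
  shows "local_map sym_mats F"
proof -
  obtain X \<alpha> where \<alpha>: "root_linear \<alpha>" and FX: "\<forall>M\<in>sym_mats. F M = M *v X + (\<chi> i. \<alpha> (M $ i $ i))"
    using normal_form by blast
  from FX root_linear_eq_0[OF \<alpha> assms] show ?thesis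
    by (rule local_map_normal_form_zero)
qed

text \<open>Homogeneity under a scalar \<open>c \<notin> {0, 1}\<close> contradicts root-linearity unless \<open>\<alpha> = 0\<close>.\<close>

lemma local_map_if_linear:
  fixes c :: 'a
  assumes lin: "linear_on sym_mats F" and c: "c \<noteq> 0" "c \<noteq> 1"
  shows "local_map sym_mats F"
proof -
  obtain X \<alpha> where \<alpha>: "root_linear \<alpha>" and FX: "\<forall>M\<in>sym_mats. F M = M *v X + (\<chi> i. \<alpha> (M $ i $ i))"
    using normal_form by blast
  fix j :: 'n
  have homogeneous: "\<alpha> (c * y) = c * \<alpha> y" for y
  proof -
    have "(\<chi> r s. c * sym_elem j j y $ r $ s) = sym_elem j j (c * y)"
      by (simp add: vec_eq_iff sym_elem_nth)
    then have "F (sym_elem j j (c * y)) = c *s F (sym_elem j j y)"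
      using lin unfolding linear_on_def by (metis sym_elem_in_sym_mats)
    then have "F (sym_elem j j (c * y)) $ j = c * F (sym_elem j j y) $ j"
      by simp
    then show ?thesis
      using FX by (simp add: sym_elem_mult_vec sym_elem_nth algebra_simps)
  qed
  have "\<alpha> x = 0" for x
  proof -
    have "\<alpha> (c^2 * x) = c * \<alpha> x"
      using \<alpha> unfolding root_linear_def by blast
    then have "c * (c * \<alpha> x) = c * \<alpha> x"
      using homogeneous[of "c * x"] homogeneous[of x] by (simp add: power2_eq_square mult.assoc)
    then have "c * ((c - 1) * \<alpha> x) = 0"
      by (simp add: algebra_simps)
    with c show ?thesis by simp
  qed
  with FX show ?thesis
    by (rule local_map_normal_form_zero)
qed

end

lemma ex_neq_0_1:
  assumes "infinite (UNIV :: 'a::field set) \<or> card (UNIV :: 'a set) > 2"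
  shows "\<exists>c::'a. c \<noteq> 0 \<and> c \<noteq> 1"
proof (rule ccontr)
  assume "\<nexists>c::'a. c \<noteq> 0 \<and> c \<noteq> 1"
  then have "(UNIV :: 'a set) \<subseteq> {0, 1}" by blast
  then show False
    using assms card_mono[of "{0::'a, 1}" UNIV] finite_subset[of UNIV "{0::'a, 1}"]
    by (auto simp: card_insert_le_m1)
qed

theorem theorem1p10:
  fixes dummy :: "'a::field ^'n ^'n"
  assumes "CARD('n) \<ge> 2"
  shows "(CHAR('a) \<noteq> 2 \<longrightarrow>
           (\<forall>F :: 'a ^'n ^'n \<Rightarrow> 'a ^'n.
              additive_on sym_mats F \<and> range_compatible sym_mats F \<longrightarrow> local_map sym_mats F))
       \<and> (CHAR('a) = 2 \<longrightarrow>
           (\<forall>F :: 'a ^'n ^'n \<Rightarrow> 'a ^'n.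
              additive_on sym_mats F \<and> range_compatible sym_mats F \<longleftrightarrow>
              (\<exists>X \<alpha>. root_linear \<alpha> \<and>
                 (\<forall>M\<in>sym_mats. F M = M *v X + (\<chi> i. \<alpha> (M $ i $ i))))))
       \<and> ((infinite (UNIV :: 'a set) \<or> card (UNIV :: 'a set) > 2) \<longrightarrow>
           (\<forall>F :: 'a ^'n ^'n \<Rightarrow> 'a ^'n.
              linear_on sym_mats F \<and> range_compatible sym_mats F \<longrightarrow> local_map sym_mats F))"
proof (intro conjI impI allI)
  fix F :: "'a ^'n ^'n \<Rightarrow> 'a ^'n"
  assume "CHAR('a) \<noteq> 2" and "additive_on sym_mats F \<and> range_compatible sym_mats F"
  with assms show "local_map sym_mats F"
    using sym_range_compatible_hom.local_map_if_two_neq_0 two_eq_zero_iff_CHAR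
    unfolding sym_range_compatible_hom_def by blast
next
  fix F :: "'a ^'n ^'n \<Rightarrow> 'a ^'n"
  assume "CHAR('a) = 2"
  then have "(2::'a) = 0"
    using two_eq_zero_iff_CHAR by blast
  with assms show "additive_on sym_mats F \<and> range_compatible sym_mats F \<longleftrightarrow>
      (\<exists>X \<alpha>. root_linear \<alpha> \<and> (\<forall>M\<in>sym_mats. F M = M *v X + (\<chi> i. \<alpha> (M $ i $ i))))"
    using sym_range_compatible_hom.normal_form[of F] additive_range_compatible_normal_form
    unfolding sym_range_compatible_hom_def by blast
next
  fix F :: "'a ^'n ^'n \<Rightarrow> 'a ^'n"
  assume "infinite (UNIV :: 'a set) \<or> card (UNIV :: 'a set) > 2"
    and "linear_on sym_mats F \<and> range_compatible sym_mats F"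
  with assms show "local_map sym_mats F"
    using ex_neq_0_1 sym_range_compatible_hom.local_map_if_linear[of F]
    unfolding sym_range_compatible_hom_def linear_on_def by blast
qed

end
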